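(* Let $\alpha>2$, $\phi_1>0$, $\theta>0$, $\mu\in[0,1]$ and $a_1,a_2>0$. Let $h,h_1,h_2$ be i.i.d. exponential random variables with unit mean, independent of a nonnegative random variable $I_{o,1}$ whose Laplace transform is $$\mathcal{L}_{I_{o,1}}(s)=\mathbb{E}\big[e^{-sI_{o,1}}\big]=\exp\!\Big(-\phi_1\,\Gamma\big(1+\tfrac{2}{\alpha}\big)\Gamma\big(1-\tfrac{2}{\alpha}\big)\,s^{2/\alpha}\Big),\quad s\ge 0.$$ Define $$\mathrm{SIR}^r_{1,1}=\frac{h}{I_{o,1}},\qquad \mathrm{SIR}^r_{1,2}=\frac{a_1\max(h_1,h_2)}{I_{o,1}+a_2\min(h_1,h_2)},\qquad \mathrm{SIR}^r_{2,2}=\frac{a_2\min(h_1,h_2)}{I_{o,1}+\mu a_1\max(h_1,h_2)},$$ and $p^r_{j,u}=\Pr(\mathrm{SIR}^r_{j,u}>\theta)$. Then $$p^r_{1,1}=\mathcal{L}_{I_{o,1}}(\theta),$$ $$p^r_{1,2}=\begin{cases}\dfrac{2a_1}{a_1+\theta a_2}\mathcal{L}_{I_{o,1}}\big(\tfrac{\theta}{a_1}\big)-\dfrac{a_1-\theta a_2}{a_1+\theta a_2}\mathcal{L}_{I_{o,1}}\Big(\dfrac{2\theta}{a_1-\theta a_2}\Big), & \text{if } 0\le \tfrac{\theta a_2}{a_1}<1,\\[2mm] \dfrac{2a_1}{a_1+\theta a_2}\mathcal{L}_{I_{o,1}}\big(\tfrac{\theta}{a_1}\big), & \text{if } \tfrac{\theta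 a_2}{a_1}\ge 1,\end{cases}$$ $$p^r_{2,2}=\begin{cases}\dfrac{a_2-\theta\mu a_1}{a_2+\theta\mu a_1}\mathcal{L}_{I_{o,1}}\Big(\dfrac{2\theta}{a_2-\theta\mu a_1}\Big), & \text{if } 0\le \tfrac{\theta\mu a_1}{a_2}<1,\\[2mm] 0, & \text{if } \tfrac{\theta\mu a_1}{a_2}\ge 1.\end{cases}$$
   Context: Model: in an interference-limited uplink, machine-type devices (MTDs) transmit to an aggregator over orthogonal channels; under random resource scheduling (RRS) at most two MTDs share a channel. $h$ is the channel power gain of an MTD alone on its channel; $h_1,h_2$ are the channel power gains of two MTDs sharing a channel, decoded by successive interference cancellation (stronger first), with power coefficients $a_1,a_2$ (in the paper $a_1+a_2=\delta$ is fixed); $\mu$ models residual interference from imperfect cancellation; $I_{o,1}$ is the normalized interference from outside the aggregation area. $p^r_{j,u}$ is the success probability of the $j$-th decoded MTD on a channel occupied by $u$ MTDs. *)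

theory Defs
  imports "HOL-Probability.Probability"
begin

definition LI :: "real \<Rightarrow> real \<Rightarrow> real \<Rightarrow> real" where
  "LI \<alpha> \<phi>1 s = exp (- \<phi>1 * Gamma (1 + 2 / \<alpha>) * Gamma (1 - 2 / \<alpha>) * s powr (2 / \<alpha>))"

end

theory Submission
  imports Defs "HOL-Real_Asymp.Real_Asymp"
begin

text \<open>
  Given the interference \<open>I = i\<close>, each success event is an event about the unit exponential
  gains alone, and its probability is a combination of terms \<open>c * exp (- s * i)\<close>; averaging
  over the independent \<open>I\<close> replaces each \<open>exp (- s * i)\<close> by the Laplace transform value \<open>L s\<close>.
  For two i.i.d. unit exponentials \<open>(x, y)\<close>, the events \<open>max > c + b * min\<close> and
  \<open>min > c + b * max\<close> are by the symmetry \<open>x \<leftrightarrow> y\<close> twice their part on one side of the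
  diagonal, and these parts are differences of regions \<open>{x > c + b * y, y > t}\<close>, whose
  probability \<open>exp (- c - (1 + b) * t) / (1 + b)\<close> is elementary. For \<open>b < 1\<close> the line
  \<open>x = c + b * y\<close> crosses the diagonal at \<open>y = c / (1 - b)\<close>; this is where the second
  exponential \<open>exp (- 2 * c / (1 - b))\<close> comes from.
\<close>

section \<open>Conditioning on an independent random variable\<close>

lemma distr_borel_eq_density:
  assumes "distributed M lborel X f"
  shows "distr M borel X = density lborel f"
proof -
  have "distr M borel X = distr M lborel X"
    by (rule distr_cong) auto
  also have "\<dots> = density lborel f"
    using distributed_distr_eq_density[OF assms] .
  finally show ?thesis .
qed

text \<open>
  \<open>indep_var\<close> forces both variables to take values in the same type;
  the joint law below is how independence is used for variables of different types.
\<close>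

lemma (in prob_space) indep_var_distr_pair_compose:
  assumes XY: "indep_var S X T Y" and f: "f \<in> measurable S S'" and g: "g \<in> measurable T T'"
  shows "distr M (S' \<Otimes>\<^sub>M T') (\<lambda>\<omega>. (f (X \<omega>), g (Y \<omega>)))
    = distr M S' (\<lambda>\<omega>. f (X \<omega>)) \<Otimes>\<^sub>M distr M T' (\<lambda>\<omega>. g (Y \<omega>))"
proof -
  have X: "random_variable S X" and Y: "random_variable T Y"
    using XY by (auto dest: indep_var_rv1 indep_var_rv2)
  have fg: "(\<lambda>(x, y). (f x, g y)) \<in> measurable (S \<Otimes>\<^sub>M T) (S' \<Otimes>\<^sub>M T')"
    using f g by measurable
  have "distr M (S' \<Otimes>\<^sub>M T') (\<lambda>\<omega>. (f (X \<omega>), g (Y \<omega>)))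
      = distr (distr M (S \<Otimes>\<^sub>M T) (\<lambda>\<omega>. (X \<omega>, Y \<omega>))) (S' \<Otimes>\<^sub>M T') (\<lambda>(x, y). (f x, g y))"
    using X Y fg by (subst distr_distr) (auto simp: comp_def)
  also have "\<dots> = distr (distr M S X \<Otimes>\<^sub>M distr M T Y) (S' \<Otimes>\<^sub>M T') (\<lambda>(x, y). (f x, g y))"
    using XY by (simp add: indep_var_distribution_eq)
  also have "\<dots> = distr (distr M S X) S' f \<Otimes>\<^sub>M distr (distr M T Y) T' g"
  proof (rule pair_measure_distr[symmetric])
    show "sigma_finite_measure (distr (distr M T Y) T' g)"
      by (intro prob_space_imp_sigma_finite prob_space.prob_space_distr prob_space_distr) (use Y g in auto)
  qed (use f g in auto)
  also have "\<dots> = distr M S' (\<lambda>\<omega>. f (X \<omega>)) \<Otimes>\<^sub>M distr M T' (\<lambda>\<omega>. g (Y \<omega>))"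
    using X Y f g by (simp add: distr_distr comp_def)
  finally show ?thesis .
qed

lemma (in prob_space) prob_eq_expectation_of_slices:
  assumes X: "random_variable S X" and Y: "random_variable T Y"
    and joint: "distr M (S \<Otimes>\<^sub>M T) (\<lambda>\<omega>. (X \<omega>, Y \<omega>)) = distr M S X \<Otimes>\<^sub>M N"
    and N: "prob_space N" and A: "A \<in> sets (S \<Otimes>\<^sub>M T)" and g: "g \<in> borel_measurable S"
    and slices: "AE \<omega> in M. measure N (Pair (X \<omega>) -` A) = g (X \<omega>)"
  shows "prob {\<omega> \<in> space M. (X \<omega>, Y \<omega>) \<in> A} = expectation (\<lambda>\<omega>. g (X \<omega>))"
proof -
  interpret N: prob_space N
    by (rule N)
  have g_bounds: "AE \<omega> in M. 0 \<le> g (X \<omega>) \<and> g (X \<omega>) \<le> 1"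
    using slices by eventually_elim (metis measure_nonneg N.prob_le_1)
  have A': "A \<in> sets (distr M S X \<Otimes>\<^sub>M N)"
    using A by (metis joint sets_distr)
  have "emeasure M {\<omega> \<in> space M. (X \<omega>, Y \<omega>) \<in> A} = emeasure (distr M (S \<Otimes>\<^sub>M T) (\<lambda>\<omega>. (X \<omega>, Y \<omega>))) A"
    using X Y A by (subst emeasure_distr) (auto intro!: arg_cong[where f = "emeasure M"])
  also have "\<dots> = (\<integral>\<^sup>+x. emeasure N (Pair x -` A) \<partial>distr M S X)"
    unfolding joint using A' by (rule N.emeasure_pair_measure_alt)
  also have "\<dots> = (\<integral>\<^sup>+\<omega>. emeasure N (Pair (X \<omega>) -` A) \<partial>M)"
    using X N.measurable_emeasure_Pair[OF A'] by (intro nn_integral_distr) auto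
  also have "\<dots> = (\<integral>\<^sup>+\<omega>. ennreal (g (X \<omega>)) \<partial>M)"
    using slices by (intro nn_integral_cong_AE) (auto simp: N.emeasure_eq_measure)
  also have "\<dots> = ennreal (expectation (\<lambda>\<omega>. g (X \<omega>)))"
  proof (rule nn_integral_eq_integral)
    show "integrable M (\<lambda>\<omega>. g (X \<omega>))"
    proof (rule integrable_const_bound[where B = 1])
      show "AE \<omega> in M. norm (g (X \<omega>)) \<le> 1"
        using g_bounds by eventually_elim auto
    qed (use X g in measurable)
    show "AE \<omega> in M. 0 \<le> g (X \<omega>)"
      using g_bounds by eventually_elim auto
  qed
  moreover have "0 \<le> expectation (\<lambda>\<omega>. g (X \<omega>))"
    using g_bounds by (intro integral_nonneg_AE) auto
  ultimately show ?thesis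
    by (simp add: emeasure_eq_measure)
qed

section \<open>Two independent unit exponentials\<close>

abbreviation Exp1 :: "real measure" where
  "Exp1 \<equiv> density lborel (exponential_density 1)"

lemma emeasure_exponential_greaterThan:
  assumes "0 < k" "0 \<le> t"
  shows "emeasure (density lborel (exponential_density k)) {t<..} = exp (- t * k)"
proof -
  interpret prob_space "density lborel (exponential_density k)"
    using prob_space_exponential_density[OF assms(1)] .
  have "distributed (density lborel (exponential_density k)) lborel (\<lambda>x. x) (exponential_density k)"
    unfolding distributed_def using assms by (auto simp: distr_id2 exponential_density_def)
  from exponential_distributedD_gt[OF this assms(2,1)] show ?thesis
    by (simp add: emeasure_eq_measure greaterThan_def)
qed

lemma prob_space_Exp1: "prob_space Exp1"
  by (rule prob_space_exponential_density) simp

lemma prob_space_Exp1_pair: "prob_space (Exp1 \<Otimes>\<^sub>M Exp1)"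
proof -
  interpret prob_space Exp1
    by (rule prob_space_Exp1)
  interpret P: pair_prob_space Exp1 Exp1 ..
  show ?thesis
    by (rule P.prob_space_axioms)
qed

lemma Collect_in_sets_Exp1_pair:
  "{p \<in> space (borel \<Otimes>\<^sub>M borel). P p} \<in> sets (borel \<Otimes>\<^sub>M borel) \<Longrightarrow> Collect P \<in> sets (Exp1 \<Otimes>\<^sub>M Exp1)"
  by (simp add: space_pair_measure cong: sets_pair_measure_cong)

lemma AE_Exp1_pair_pos_distinct: "AE p in Exp1 \<Otimes>\<^sub>M Exp1. 0 < fst p \<and> 0 < snd p \<and> fst p \<noteq> snd p"
proof -
  interpret prob_space Exp1
    by (rule prob_space_Exp1)
  interpret pair_sigma_finite Exp1 Exp1 ..
  have Exp1_pos_neq: "AE x in Exp1. 0 < x \<and> x \<noteq> y" for y :: real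
  proof -
    have "AE x in lborel. 0 < exponential_density 1 x \<longrightarrow> 0 < x \<and> x \<noteq> y"
      using AE_lborel_singleton[of 0] AE_lborel_singleton[of y]
      by eventually_elim (auto simp: exponential_density_def)
    then show ?thesis
      by (subst AE_density) auto
  qed
  show ?thesis
  proof (rule AE_pair_measure)
    show "AE x in Exp1. AE y in Exp1. 0 < fst (x, y) \<and> 0 < snd (x, y) \<and> fst (x, y) \<noteq> snd (x, y)"
      using Exp1_pos_neq[of 0]
    proof eventually_elim
      case (elim x)
      show ?case
        using Exp1_pos_neq[of x] by (rule eventually_mono) (use elim in auto)
    qed
  qed measurable
qed

lemma measure_Exp1_pair_swap_union:
  assumes A: "{p. P (fst p) (snd p)} \<in> sets (Exp1 \<Otimes>\<^sub>M Exp1)"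
    and antisym: "\<And>x y. P x y \<Longrightarrow> \<not> P y x"
  shows "measure (Exp1 \<Otimes>\<^sub>M Exp1) {p. P (fst p) (snd p) \<or> P (snd p) (fst p)}
    = 2 * measure (Exp1 \<Otimes>\<^sub>M Exp1) {p. P (fst p) (snd p)}"
proof -
  interpret prob_space Exp1
    by (rule prob_space_Exp1)
  interpret P: pair_prob_space Exp1 Exp1 ..
  let ?A = "{p. P (fst p) (snd p)}" and ?B = "{p. P (snd p) (fst p)}"
  have B_eq: "?B = (\<lambda>(x, y). (y, x)) -` ?A \<inter> space (Exp1 \<Otimes>\<^sub>M Exp1)"
    by (auto simp: space_pair_measure)
  have B: "?B \<in> sets (Exp1 \<Otimes>\<^sub>M Exp1)"
    unfolding B_eq using A by (rule sets_pair_swap)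
  have "P.prob ?B = measure (distr (Exp1 \<Otimes>\<^sub>M Exp1) (Exp1 \<Otimes>\<^sub>M Exp1) (\<lambda>(x, y). (y, x))) ?A"
    unfolding B_eq using A by (simp add: measure_distr measurable_pair_swap')
  also have "\<dots> = P.prob ?A"
    by (simp flip: P.distr_pair_swap)
  finally have "P.prob ?B = P.prob ?A" .
  moreover have "{p. P (fst p) (snd p) \<or> P (snd p) (fst p)} = ?A \<union> ?B"
    by auto
  moreover have "?A \<inter> ?B = {}"
    using antisym by auto
  ultimately show ?thesis
    using P.finite_measure_Union[OF A B] by simp
qed

lemma measure_Exp1_pair_above_line:
  assumes "0 \<le> b" "0 \<le> t" "0 \<le> c + b * t"
  shows "measure (Exp1 \<Otimes>\<^sub>M Exp1) {p. c + b * snd p < fst p \<and> t < snd p}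
    = exp (- c) * exp (- (1 + b) * t) / (1 + b)"
proof -
  interpret prob_space Exp1
    by (rule prob_space_Exp1)
  interpret pair_sigma_finite Exp1 Exp1 ..
  let ?A = "{p. c + b * snd p < fst p \<and> t < snd p}"
  have "?A \<in> sets (Exp1 \<Otimes>\<^sub>M Exp1)"
    by (rule Collect_in_sets_Exp1_pair) measurable
  then have "emeasure (Exp1 \<Otimes>\<^sub>M Exp1) ?A = (\<integral>\<^sup>+y. emeasure Exp1 ((\<lambda>x. (x, y)) -` ?A) \<partial>Exp1)"
    by (rule emeasure_pair_measure_alt2)
  also have "\<dots> = (\<integral>\<^sup>+y. ennreal (exp (- (c + b * y))) * indicator {t<..} y \<partial>Exp1)"
  proof (intro nn_integral_cong)
    fix y :: real
    have "0 \<le> c + b * y" if "t < y"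
      using assms that mult_left_mono[of t y b] by linarith
    then show "emeasure Exp1 ((\<lambda>x. (x, y)) -` ?A) = ennreal (exp (- (c + b * y))) * indicator {t<..} y"
      using emeasure_exponential_greaterThan[of 1 "c + b * y"]
      by (cases "t < y") (auto simp: greaterThan_def)
  qed
  also have "\<dots> = (\<integral>\<^sup>+y. ennreal (exponential_density 1 y) *
      (ennreal (exp (- (c + b * y))) * indicator {t<..} y) \<partial>lborel)"
    by (subst nn_integral_density) auto
  also have "\<dots> = (\<integral>\<^sup>+y. ennreal (exp (- c) / (1 + b)) *
      (ennreal (exponential_density (1 + b) y) * indicator {t<..} y) \<partial>lborel)"
  proof (intro nn_integral_cong)
    fix y :: real
    have "exp (- y) * exp (- (c + b * y)) = exp (- c) / (1 + b) * ((1 + b) * exp (- ((1 + b) * y)))"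
      using assms by (simp add: exp_add[symmetric] field_simps)
    then show "ennreal (exponential_density 1 y) * (ennreal (exp (- (c + b * y))) * indicator {t<..} y) =
      ennreal (exp (- c) / (1 + b)) * (ennreal (exponential_density (1 + b) y) * indicator {t<..} y)"
      using assms by (auto simp: exponential_density_def ennreal_mult'[symmetric] indicator_def)
  qed
  also have "\<dots> = ennreal (exp (- c) / (1 + b)) * emeasure (density lborel (exponential_density (1 + b))) {t<..}"
    by (simp add: nn_integral_cmult emeasure_density)
  also have "\<dots> = ennreal (exp (- c) * exp (- (1 + b) * t) / (1 + b))"
    using assms by (simp add: emeasure_exponential_greaterThan ennreal_mult'[symmetric] algebra_simps)
  finally show ?thesis
    using assms by (simp add: measure_def)
qed

lemma measure_Exp1_pair_wedge:
  assumes "0 < c" "0 \<le> b"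
  shows "measure (Exp1 \<Otimes>\<^sub>M Exp1) {p. c + b * snd p < fst p \<and> fst p < snd p}
    = (if b < 1 then (1 - b) / (1 + b) * exp (- (2 * c / (1 - b))) / 2 else 0)"
proof (cases "b < 1")
  case False
  have "AE p in Exp1 \<Otimes>\<^sub>M Exp1. p \<in> {p. c + b * snd p < fst p \<and> fst p < snd p} \<longleftrightarrow> p \<in> {}"
    using AE_Exp1_pair_pos_distinct
  proof eventually_elim
    case (elim p)
    then have "snd p \<le> b * snd p"
      using False by (intro mult_le_cancel_right1[THEN iffD2]) auto
    then show ?case
      using assms by auto
  qed
  moreover have "{p. c + b * snd p < fst p \<and> fst p < snd p} \<in> sets (Exp1 \<Otimes>\<^sub>M Exp1)"
    by (rule Collect_in_sets_Exp1_pair) measurable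
  ultimately have "measure (Exp1 \<Otimes>\<^sub>M Exp1) {p. c + b * snd p < fst p \<and> fst p < snd p}
      = measure (Exp1 \<Otimes>\<^sub>M Exp1) {}"
    by (intro measure_eq_AE) auto
  then show ?thesis
    using False by simp
next
  case True
  interpret P: prob_space "Exp1 \<Otimes>\<^sub>M Exp1"
    by (rule prob_space_Exp1_pair)
  define m where "m = c / (1 - b)"
  have m_pos: "0 < m"
    using True assms by (simp add: m_def)
  have c_eq: "c = (1 - b) * m"
    using True by (simp add: m_def)
  have below_diagonal_iff: "c + b * y < y \<longleftrightarrow> m < y" for y
  proof -
    have "m < y \<longleftrightarrow> c < (1 - b) * y"
      using True by (simp add: m_def pos_divide_less_eq mult.commute)
    then show ?thesis
      by (simp add: algebra_simps)
  qed
  let ?W = "{p. c + b * snd p < fst p \<and> fst p < snd p}"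
  let ?V = "{p. snd p < fst p \<and> m < snd p}"
  let ?U = "{p. c + b * snd p < fst p \<and> m < snd p}"
  have sets: "?W \<in> P.events" "?V \<in> P.events" "?U \<in> P.events"
    by (rule Collect_in_sets_Exp1_pair; measurable)+
  have "AE p in Exp1 \<Otimes>\<^sub>M Exp1. p \<in> ?U \<longleftrightarrow> p \<in> ?W \<union> ?V"
    using AE_Exp1_pair_pos_distinct
  proof eventually_elim
    case (elim p)
    then show ?case
      using below_diagonal_iff[of "snd p"] by (cases "fst p < snd p") auto
  qed
  then have "P.prob ?U = P.prob (?W \<union> ?V)"
    using sets by (intro measure_eq_AE) auto
  also have "\<dots> = P.prob ?W + P.prob ?V"
    using sets by (intro P.finite_measure_Union) (auto simp: below_diagonal_iff)
  finally have "P.prob ?W = P.prob ?U - P.prob ?V"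
    by simp
  moreover have "P.prob ?U = exp (- (2 * m)) / (1 + b)"
  proof -
    have "P.prob ?U = exp (- c) * exp (- (1 + b) * m) / (1 + b)"
      using assms m_pos by (intro measure_Exp1_pair_above_line) auto
    also have "exp (- c) * exp (- (1 + b) * m) = exp (- (2 * m))"
      unfolding c_eq by (simp flip: exp_add) (simp add: algebra_simps)
    finally show ?thesis .
  qed
  moreover have "P.prob ?V = exp (- (2 * m)) / 2"
    using measure_Exp1_pair_above_line[of 1 m 0] m_pos by simp
  ultimately have "P.prob ?W = exp (- (2 * m)) / (1 + b) - exp (- (2 * m)) / 2"
    by simp
  also have "\<dots> = (1 - b) / (1 + b) * exp (- (2 * m)) / 2"
    using assms by (simp add: field_simps)
  finally show ?thesis
    using True by (simp add: m_def)
qed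

lemma measure_Exp1_pair_max_gt:
  assumes "0 < c" "0 \<le> b"
  shows "measure (Exp1 \<Otimes>\<^sub>M Exp1) {p. c + b * min (fst p) (snd p) < max (fst p) (snd p)}
    = (if b < 1 then 2 / (1 + b) * exp (- c) - (1 - b) / (1 + b) * exp (- (2 * c / (1 - b)))
       else 2 / (1 + b) * exp (- c))"
proof -
  interpret P: prob_space "Exp1 \<Otimes>\<^sub>M Exp1"
    by (rule prob_space_Exp1_pair)
  let ?S = "{p. c + b * min (fst p) (snd p) < max (fst p) (snd p)}"
  let ?S' = "{p. (c + b * snd p < fst p \<and> snd p < fst p) \<or> (c + b * fst p < snd p \<and> fst p < snd p)}"
  let ?D = "{p. c + b * snd p < fst p \<and> snd p < fst p}"
  let ?W = "{p. c + b * snd p < fst p \<and> fst p < snd p}"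
  let ?H = "{p. c + b * snd p < fst p \<and> 0 < snd p}"
  have sets: "?S \<in> P.events" "?S' \<in> P.events" "?D \<in> P.events" "?W \<in> P.events" "?H \<in> P.events"
    by (rule Collect_in_sets_Exp1_pair; measurable)+
  have "AE p in Exp1 \<Otimes>\<^sub>M Exp1. p \<in> ?S \<longleftrightarrow> p \<in> ?S'"
    using AE_Exp1_pair_pos_distinct
  proof eventually_elim
    case (elim p)
    then show ?case
      by (cases "fst p < snd p") (auto simp: min_def max_def)
  qed
  then have "P.prob ?S = P.prob ?S'"
    using sets by (intro measure_eq_AE) auto
  also have "\<dots> = 2 * P.prob ?D"
    by (rule measure_Exp1_pair_swap_union[where P = "\<lambda>x y. c + b * y < x \<and> y < x"]) (use sets in auto)
  also have "P.prob ?D = P.prob ?H - P.prob ?W"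
  proof -
    have "AE p in Exp1 \<Otimes>\<^sub>M Exp1. p \<in> ?H \<longleftrightarrow> p \<in> ?D \<union> ?W"
      using AE_Exp1_pair_pos_distinct
    proof eventually_elim
      case (elim p)
      then show ?case
        using assms by (cases "fst p < snd p") (auto intro: add_pos_nonneg)
    qed
    then have "P.prob ?H = P.prob (?D \<union> ?W)"
      using sets by (intro measure_eq_AE) auto
    also have "\<dots> = P.prob ?D + P.prob ?W"
      using sets by (intro P.finite_measure_Union) auto
    finally show ?thesis
      by simp
  qed
  also have "P.prob ?H = exp (- c) / (1 + b)"
    using measure_Exp1_pair_above_line[of b 0 c] assms by simp
  finally have "P.prob ?S = 2 * (exp (- c) / (1 + b) - P.prob ?W)" .
  then show ?thesis
    using assms by (simp add: measure_Exp1_pair_wedge diff_divide_distrib right_diff_distrib)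
qed

lemma measure_Exp1_pair_min_gt:
  assumes "0 < c" "0 \<le> b"
  shows "measure (Exp1 \<Otimes>\<^sub>M Exp1) {p. c + b * max (fst p) (snd p) < min (fst p) (snd p)}
    = (if b < 1 then (1 - b) / (1 + b) * exp (- (2 * c / (1 - b))) else 0)"
proof -
  interpret P: prob_space "Exp1 \<Otimes>\<^sub>M Exp1"
    by (rule prob_space_Exp1_pair)
  let ?S = "{p. c + b * max (fst p) (snd p) < min (fst p) (snd p)}"
  let ?S' = "{p. (c + b * snd p < fst p \<and> fst p < snd p) \<or> (c + b * fst p < snd p \<and> snd p < fst p)}"
  let ?W = "{p. c + b * snd p < fst p \<and> fst p < snd p}"
  have sets: "?S \<in> P.events" "?S' \<in> P.events" "?W \<in> P.events"
    by (rule Collect_in_sets_Exp1_pair; measurable)+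
  have "AE p in Exp1 \<Otimes>\<^sub>M Exp1. p \<in> ?S \<longleftrightarrow> p \<in> ?S'"
    using AE_Exp1_pair_pos_distinct
  proof eventually_elim
    case (elim p)
    then show ?case
      by (cases "fst p < snd p") (auto simp: min_def max_def)
  qed
  then have "P.prob ?S = P.prob ?S'"
    using sets by (intro measure_eq_AE) auto
  also have "\<dots> = 2 * P.prob ?W"
    by (rule measure_Exp1_pair_swap_union[where P = "\<lambda>x y. c + b * y < x \<and> x < y"]) (use sets in auto)
  finally show ?thesis
    using assms by (simp add: measure_Exp1_pair_wedge field_simps)
qed

lemma pos_less_mult_divide_iff:
  fixes d a t x :: real
  assumes "0 < d" "0 < a"
  shows "t < a * x / d \<longleftrightarrow> t * d / a < x"
  using assms by (simp add: pos_less_divide_eq pos_divide_less_eq mult.commute)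

lemma measure_Exp1_pair_max_SIR_gt:
  assumes "0 < i" "0 < \<theta>" "0 < a1" "0 < a2"
  shows "measure (Exp1 \<Otimes>\<^sub>M Exp1) {p. \<theta> < a1 * max (fst p) (snd p) / (i + a2 * min (fst p) (snd p))}
    = (if \<theta> * a2 / a1 < 1
       then 2 * a1 / (a1 + \<theta> * a2) * exp (- (\<theta> / a1 * i))
          - (a1 - \<theta> * a2) / (a1 + \<theta> * a2) * exp (- (2 * \<theta> / (a1 - \<theta> * a2) * i))
       else 2 * a1 / (a1 + \<theta> * a2) * exp (- (\<theta> / a1 * i)))" (is "_ = ?rhs")
proof -
  define b c where "b = \<theta> * a2 / a1" and "c = \<theta> * i / a1"
  let ?S = "{p. \<theta> < a1 * max (fst p) (snd p) / (i + a2 * min (fst p) (snd p))}"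
  let ?S' = "{p. c + b * min (fst p) (snd p) < max (fst p) (snd p)}"
  have "AE p in Exp1 \<Otimes>\<^sub>M Exp1. p \<in> ?S \<longleftrightarrow> p \<in> ?S'"
    using AE_Exp1_pair_pos_distinct
  proof eventually_elim
    case (elim p)
    then have "0 < i + a2 * min (fst p) (snd p)"
      using assms by (intro add_pos_pos) auto
    moreover have "\<theta> * (i + a2 * min (fst p) (snd p)) / a1 = c + b * min (fst p) (snd p)"
      using assms by (simp add: b_def c_def field_simps)
    ultimately show ?case
      using pos_less_mult_divide_iff[of _ a1 \<theta> "max (fst p) (snd p)"] assms by simp
  qed
  then have "measure (Exp1 \<Otimes>\<^sub>M Exp1) ?S = measure (Exp1 \<Otimes>\<^sub>M Exp1) ?S'"
    by (rule measure_eq_AE) (rule Collect_in_sets_Exp1_pair; measurable)+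
  also have "\<dots> = (if b < 1 then 2 / (1 + b) * exp (- c) - (1 - b) / (1 + b) * exp (- (2 * c / (1 - b)))
      else 2 / (1 + b) * exp (- c))"
    using assms by (intro measure_Exp1_pair_max_gt) (auto simp: b_def c_def)
  also have "\<dots> = ?rhs"
  proof -
    have "1 + b = (a1 + \<theta> * a2) / a1" "1 - b = (a1 - \<theta> * a2) / a1"
      using assms by (simp_all add: b_def field_simps)
    then have "2 / (1 + b) = 2 * a1 / (a1 + \<theta> * a2)"
      "(1 - b) / (1 + b) = (a1 - \<theta> * a2) / (a1 + \<theta> * a2)"
      "exp (- c) = exp (- (\<theta> / a1 * i))" "2 * c / (1 - b) = 2 * \<theta> / (a1 - \<theta> * a2) * i"
      using assms by (simp_all add: c_def)
    then show ?thesis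
      by (simp only:) (simp add: b_def)
  qed
  finally show ?thesis .
qed

lemma measure_Exp1_pair_min_SIR_gt:
  assumes "0 < i" "0 < \<theta>" "0 \<le> \<mu>" "0 < a1" "0 < a2"
  shows "measure (Exp1 \<Otimes>\<^sub>M Exp1) {p. \<theta> < a2 * min (fst p) (snd p) / (i + \<mu> * a1 * max (fst p) (snd p))}
    = (if \<theta> * \<mu> * a1 / a2 < 1
       then (a2 - \<theta> * \<mu> * a1) / (a2 + \<theta> * \<mu> * a1) * exp (- (2 * \<theta> / (a2 - \<theta> * \<mu> * a1) * i))
       else 0)" (is "_ = ?rhs")
proof -
  define b c where "b = \<theta> * \<mu> * a1 / a2" and "c = \<theta> * i / a2"
  let ?S = "{p. \<theta> < a2 * min (fst p) (snd p) / (i + \<mu> * a1 * max (fst p) (snd p))}"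
  let ?S' = "{p. c + b * max (fst p) (snd p) < min (fst p) (snd p)}"
  have "AE p in Exp1 \<Otimes>\<^sub>M Exp1. p \<in> ?S \<longleftrightarrow> p \<in> ?S'"
    using AE_Exp1_pair_pos_distinct
  proof eventually_elim
    case (elim p)
    then have "0 < i + \<mu> * a1 * max (fst p) (snd p)"
      using assms by (intro add_pos_nonneg) auto
    moreover have "\<theta> * (i + \<mu> * a1 * max (fst p) (snd p)) / a2 = c + b * max (fst p) (snd p)"
      using assms by (simp add: b_def c_def field_simps)
    ultimately show ?case
      using pos_less_mult_divide_iff[of _ a2 \<theta> "min (fst p) (snd p)"] assms by simp
  qed
  then have "measure (Exp1 \<Otimes>\<^sub>M Exp1) ?S = measure (Exp1 \<Otimes>\<^sub>M Exp1) ?S'"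
    by (rule measure_eq_AE) (rule Collect_in_sets_Exp1_pair; measurable)+
  also have "\<dots> = (if b < 1 then (1 - b) / (1 + b) * exp (- (2 * c / (1 - b))) else 0)"
    using assms by (intro measure_Exp1_pair_min_gt) (auto simp: b_def c_def)
  also have "\<dots> = ?rhs"
  proof -
    have "1 + b = (a2 + \<theta> * \<mu> * a1) / a2" "1 - b = (a2 - \<theta> * \<mu> * a1) / a2"
      using assms by (simp_all add: b_def field_simps)
    then have "(1 - b) / (1 + b) = (a2 - \<theta> * \<mu> * a1) / (a2 + \<theta> * \<mu> * a1)"
      "2 * c / (1 - b) = 2 * \<theta> / (a2 - \<theta> * \<mu> * a1) * i"
      using assms by (simp_all add: c_def)
    then show ?thesis
      by (simp only:) (simp add: b_def)
  qed
  finally show ?thesis .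
qed

section \<open>The uplink model\<close>

lemma LI_tendsto_0:
  assumes "2 < \<alpha>" "0 < \<phi>1"
  shows "(LI \<alpha> \<phi>1 \<longlongrightarrow> 0) at_top"
proof -
  define K where "K = \<phi>1 * Gamma (1 + 2 / \<alpha>) * Gamma (1 - 2 / \<alpha>)"
  define e where "e = 2 / \<alpha>"
  have "0 < e" "e < 1"
    using assms by (simp_all add: e_def field_simps)
  then have "0 < K"
    unfolding K_def e_def[symmetric] using assms by (intro mult_pos_pos Gamma_real_pos) auto
  have "LI \<alpha> \<phi>1 = (\<lambda>s. exp (- K * s powr e))"
    by (simp add: fun_eq_iff LI_def K_def e_def)
  moreover have "((\<lambda>s. exp (- K * s powr e)) \<longlongrightarrow> 0) at_top"
    using \<open>0 < K\<close> \<open>0 < e\<close> by real_asymp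
  ultimately show ?thesis
    by simp
qed

locale rayleigh_uplink = prob_space M for M :: "'a measure" +
  fixes h h1 h2 I :: "'a \<Rightarrow> real" and L :: "real \<Rightarrow> real"
  assumes distributed_h: "distributed M lborel h (exponential_density 1)"
    and distributed_h1: "distributed M lborel h1 (exponential_density 1)"
    and distributed_h2: "distributed M lborel h2 (exponential_density 1)"
    and borel_measurable_I [measurable]: "I \<in> borel_measurable M"
    and I_nonneg: "\<And>x. x \<in> space M \<Longrightarrow> 0 \<le> I x"
    and indep_vars: "indep_vars (\<lambda>_. borel) (\<lambda>i. [h, h1, h2, I] ! i) {0..<4}"
    and expectation_exp_I: "\<And>s. 0 \<le> s \<Longrightarrow> expectation (\<lambda>x. exp (- (s * I x))) = L s"
    and L_tendsto_0: "(L \<longlongrightarrow> 0) at_top"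
begin

lemma borel_measurable_gains [measurable]:
  "h \<in> borel_measurable M" "h1 \<in> borel_measurable M" "h2 \<in> borel_measurable M"
  using distributed_measurable[OF distributed_h] distributed_measurable[OF distributed_h1]
    distributed_measurable[OF distributed_h2]
  by simp_all

lemma integrable_exp_I: "0 \<le> s \<Longrightarrow> integrable M (\<lambda>x. exp (- (s * I x)))"
  by (rule integrable_const_bound[where B = 1]) (use I_nonneg in auto)

lemma expectation_exp_I_diff:
  assumes "0 \<le> s1" "0 \<le> s2"
  shows "expectation (\<lambda>x. c1 * exp (- (s1 * I x)) - c2 * exp (- (s2 * I x))) = c1 * L s1 - c2 * L s2"
  using integrable_exp_I[OF assms(1)] integrable_exp_I[OF assms(2)]
    expectation_exp_I[OF assms(1)] expectation_exp_I[OF assms(2)]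
  by simp

lemma expectation_scaled_exp_I:
  "0 \<le> s \<Longrightarrow> expectation (\<lambda>x. c * exp (- (s * I x))) = c * L s"
  by (simp add: expectation_exp_I)

text \<open>
  The SIR events divide by \<open>I\<close>, and \<open>h / 0 = 0\<close> in HOL, so the conditional success
  probabilities are only correct where \<open>I > 0\<close>. This holds almost surely because
  \<open>P(I = 0) \<le> E exp (- s * I) = L s\<close> for every \<open>s \<ge> 0\<close>.
\<close>

lemma AE_I_pos: "AE x in M. 0 < I x"
proof -
  let ?Z = "{x \<in> space M. \<not> 0 < I x}"
  have Z: "?Z \<in> events"
    by measurable
  have "prob ?Z \<le> L s" if "0 \<le> s" for s
  proof -
    have "prob ?Z = expectation (indicator ?Z)"
      using Z by simp
    also have "\<dots> \<le> expectation (\<lambda>x. exp (- (s * I x)))"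
    proof (rule integral_mono)
      show "indicator ?Z x \<le> exp (- (s * I x))" if "x \<in> space M" for x
        using I_nonneg[OF that] by (cases "0 < I x") (auto simp: indicator_def)
    qed (use Z integrable_exp_I[OF that] in \<open>auto simp: emeasure_eq_measure\<close>)
    finally show ?thesis
      using expectation_exp_I[OF that] by simp
  qed
  then have "prob ?Z \<le> 0"
    by (intro tendsto_le[OF trivial_limit_at_top_linorder L_tendsto_0 tendsto_const])
      (auto intro: eventually_mono[OF eventually_ge_at_top[of 0]])
  then have "emeasure M ?Z = 0"
    by (simp add: emeasure_eq_measure measure_le_0_iff)
  then show ?thesis
    using Z by (subst AE_iff_measurable[OF _ refl]) auto
qed

lemma distr_h12: "distr M (borel \<Otimes>\<^sub>M borel) (\<lambda>x. (h1 x, h2 x)) = Exp1 \<Otimes>\<^sub>M Exp1"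
proof -
  have "distr M (borel \<Otimes>\<^sub>M borel) (\<lambda>x. (h1 x, h2 x)) = distr M borel h1 \<Otimes>\<^sub>M distr M borel h2"
    using indep_var_distr_pair_compose[OF indep_var_restrict[OF indep_vars, of "{1}" "{2}"],
        where f = "\<lambda>v. v 1" and S' = borel and g = "\<lambda>v. v 2" and T' = borel]
    by (simp add: measurable_component_singleton)
  then show ?thesis
    using distr_borel_eq_density[OF distributed_h1] distr_borel_eq_density[OF distributed_h2] by simp
qed

lemma distr_I_h: "distr M (borel \<Otimes>\<^sub>M borel) (\<lambda>x. (I x, h x)) = distr M borel I \<Otimes>\<^sub>M Exp1"
  using indep_var_distr_pair_compose[OF indep_var_restrict[OF indep_vars, of "{3}" "{0}"],
      where f = "\<lambda>v. v 3" and S' = borel and g = "\<lambda>v. v 0" and T' = borel]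
  by (simp add: measurable_component_singleton distr_borel_eq_density[OF distributed_h])

lemma distr_I_h12:
  "distr M (borel \<Otimes>\<^sub>M (borel \<Otimes>\<^sub>M borel)) (\<lambda>x. (I x, (h1 x, h2 x)))
    = distr M borel I \<Otimes>\<^sub>M (Exp1 \<Otimes>\<^sub>M Exp1)"
  using indep_var_distr_pair_compose[OF indep_var_restrict[OF indep_vars, of "{3}" "{1, 2}"],
      where f = "\<lambda>v. v 3" and S' = borel and g = "\<lambda>v. (v 1, v 2)" and T' = "borel \<Otimes>\<^sub>M borel"]
  by (simp add: measurable_component_singleton distr_h12)

lemma prob_success_1_1:
  assumes "0 < \<theta>"
  shows "prob {x \<in> space M. h x / I x > \<theta>} = L \<theta>"
proof -
  let ?A = "{q \<in> space (borel \<Otimes>\<^sub>M borel). \<theta> < snd q / fst q}"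
  have A: "?A \<in> sets (borel \<Otimes>\<^sub>M borel)"
    by measurable
  have "prob {x \<in> space M. h x / I x > \<theta>} = prob {x \<in> space M. (I x, h x) \<in> ?A}"
    by (simp add: space_pair_measure)
  also have "\<dots> = expectation (\<lambda>x. exp (- (\<theta> * I x)))"
  proof (rule prob_eq_expectation_of_slices[OF borel_measurable_I _ distr_I_h prob_space_Exp1 A])
    show "AE x in M. measure Exp1 (Pair (I x) -` ?A) = exp (- (\<theta> * I x))"
      using AE_I_pos
    proof eventually_elim
      case (elim x)
      then have "Pair (I x) -` ?A = {\<theta> * I x<..}"
        by (auto simp: space_pair_measure pos_less_divide_eq)
      then show ?case
        using emeasure_exponential_greaterThan[of 1 "\<theta> * I x"] elim assms by (simp add: measure_def)
    qed
  qed measurable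
  also have "\<dots> = L \<theta>"
    using assms by (intro expectation_exp_I) simp
  finally show ?thesis .
qed

lemma prob_success_1_2:
  assumes "0 < \<theta>" "0 < a1" "0 < a2"
  shows "prob {x \<in> space M. a1 * max (h1 x) (h2 x) / (I x + a2 * min (h1 x) (h2 x)) > \<theta>} =
    (if \<theta> * a2 / a1 < 1
     then 2 * a1 / (a1 + \<theta> * a2) * L (\<theta> / a1)
        - (a1 - \<theta> * a2) / (a1 + \<theta> * a2) * L (2 * \<theta> / (a1 - \<theta> * a2))
     else 2 * a1 / (a1 + \<theta> * a2) * L (\<theta> / a1))" (is "?lhs = ?rhs")
proof -
  define g where "g i = (if \<theta> * a2 / a1 < 1
     then 2 * a1 / (a1 + \<theta> * a2) * exp (- (\<theta> / a1 * i))
        - (a1 - \<theta> * a2) / (a1 + \<theta> * a2) * exp (- (2 * \<theta> / (a1 - \<theta> * a2) * i))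
     else 2 * a1 / (a1 + \<theta> * a2) * exp (- (\<theta> / a1 * i)))" for i
  let ?A = "{q \<in> space (borel \<Otimes>\<^sub>M (borel \<Otimes>\<^sub>M borel)).
    \<theta> < a1 * max (fst (snd q)) (snd (snd q)) / (fst q + a2 * min (fst (snd q)) (snd (snd q)))}"
  have A: "?A \<in> sets (borel \<Otimes>\<^sub>M (borel \<Otimes>\<^sub>M borel))"
    by measurable
  have g: "g \<in> borel_measurable borel"
    unfolding g_def by measurable
  have "?lhs = prob {x \<in> space M. (I x, h1 x, h2 x) \<in> ?A}"
    by (simp add: space_pair_measure)
  also have "\<dots> = expectation (\<lambda>x. g (I x))"
  proof (rule prob_eq_expectation_of_slices[OF borel_measurable_I _ distr_I_h12 prob_space_Exp1_pair A g])
    show "AE x in M. measure (Exp1 \<Otimes>\<^sub>M Exp1) (Pair (I x) -` ?A) = g (I x)"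
      using AE_I_pos
      by eventually_elim (use assms in \<open>simp add: space_pair_measure g_def measure_Exp1_pair_max_SIR_gt\<close>)
  qed measurable
  also have "\<dots> = ?rhs"
  proof (cases "\<theta> * a2 / a1 < 1")
    case True
    then have "0 < a1 - \<theta> * a2"
      using assms by (simp add: field_simps)
    then show ?thesis
      using assms by (simp only: g_def True if_True) (rule expectation_exp_I_diff; simp)
  next
    case False
    then show ?thesis
      using assms by (simp only: g_def False if_False) (rule expectation_scaled_exp_I; simp)
  qed
  finally show ?thesis .
qed

lemma prob_success_2_2:
  assumes "0 < \<theta>" "0 \<le> \<mu>" "0 < a1" "0 < a2"
  shows "prob {x \<in> space M. a2 * min (h1 x) (h2 x) / (I x + \<mu> * a1 * max (h1 x) (h2 x)) > \<theta>} =
    (if \<theta> * \<mu> * a1 / a2 < 1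
     then (a2 - \<theta> * \<mu> * a1) / (a2 + \<theta> * \<mu> * a1) * L (2 * \<theta> / (a2 - \<theta> * \<mu> * a1))
     else 0)" (is "?lhs = ?rhs")
proof -
  define g where "g i = (if \<theta> * \<mu> * a1 / a2 < 1
     then (a2 - \<theta> * \<mu> * a1) / (a2 + \<theta> * \<mu> * a1) * exp (- (2 * \<theta> / (a2 - \<theta> * \<mu> * a1) * i))
     else 0)" for i
  let ?A = "{q \<in> space (borel \<Otimes>\<^sub>M (borel \<Otimes>\<^sub>M borel)).
    \<theta> < a2 * min (fst (snd q)) (snd (snd q)) / (fst q + \<mu> * a1 * max (fst (snd q)) (snd (snd q)))}"
  have A: "?A \<in> sets (borel \<Otimes>\<^sub>M (borel \<Otimes>\<^sub>M borel))"
    by measurable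
  have g: "g \<in> borel_measurable borel"
    unfolding g_def by measurable
  have "?lhs = prob {x \<in> space M. (I x, h1 x, h2 x) \<in> ?A}"
    by (simp add: space_pair_measure)
  also have "\<dots> = expectation (\<lambda>x. g (I x))"
  proof (rule prob_eq_expectation_of_slices[OF borel_measurable_I _ distr_I_h12 prob_space_Exp1_pair A g])
    show "AE x in M. measure (Exp1 \<Otimes>\<^sub>M Exp1) (Pair (I x) -` ?A) = g (I x)"
      using AE_I_pos
      by eventually_elim (use assms in \<open>simp add: space_pair_measure g_def measure_Exp1_pair_min_SIR_gt\<close>)
  qed measurable
  also have "\<dots> = ?rhs"
  proof (cases "\<theta> * \<mu> * a1 / a2 < 1")
    case True
    then have "0 < a2 - \<theta> * \<mu> * a1"
      using assms by (simp add: field_simps)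
    then show ?thesis
      using assms by (simp only: g_def True if_True) (rule expectation_scaled_exp_I; simp)
  qed (simp add: g_def)
  finally show ?thesis .
qed

end

theorem theorem1:
  fixes M :: "'a measure" and h h1 h2 I :: "'a \<Rightarrow> real"
    and \<alpha> \<phi>1 \<theta> \<mu> a1 a2 :: real
  assumes "prob_space M"
    and "\<alpha> > 2" and "\<phi>1 > 0" and "\<theta> > 0" and "0 \<le> \<mu>" and "\<mu> \<le> 1"
    and "a1 > 0" and "a2 > 0"
    and "distributed M lborel h (exponential_density 1)"
    and "distributed M lborel h1 (exponential_density 1)"
    and "distributed M lborel h2 (exponential_density 1)"
    and "I \<in> borel_measurable M"
    and "\<forall>x\<in>space M. I x \<ge> 0"
    and "prob_space.indep_vars M (\<lambda>_. borel) (\<lambda>i. [h, h1, h2, I] ! i) {0..<4}"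
    and "\<forall>s\<ge>0. integral\<^sup>L M (\<lambda>x. exp (- s * I x)) = LI \<alpha> \<phi>1 s"
  shows "measure M {x \<in> space M. h x / I x > \<theta>} = LI \<alpha> \<phi>1 \<theta>
    \<and> measure M {x \<in> space M.
            a1 * max (h1 x) (h2 x) / (I x + a2 * min (h1 x) (h2 x)) > \<theta>} =
         (if \<theta> * a2 / a1 < 1
          then 2 * a1 / (a1 + \<theta> * a2) * LI \<alpha> \<phi>1 (\<theta> / a1)
               - (a1 - \<theta> * a2) / (a1 + \<theta> * a2) * LI \<alpha> \<phi>1 (2 * \<theta> / (a1 - \<theta> * a2))
          else 2 * a1 / (a1 + \<theta> * a2) * LI \<alpha> \<phi>1 (\<theta> / a1))
    \<and> measure M {x \<in> space M.
            a2 * min (h1 x) (h2 x) / (I x + \<mu> * a1 * max (h1 x) (h2 x)) > \<theta>} =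
         (if \<theta> * \<mu> * a1 / a2 < 1
          then (a2 - \<theta> * \<mu> * a1) / (a2 + \<theta> * \<mu> * a1)
               * LI \<alpha> \<phi>1 (2 * \<theta> / (a2 - \<theta> * \<mu> * a1))
          else 0)"
proof -
  interpret rayleigh_uplink M h h1 h2 I "LI \<alpha> \<phi>1"
  proof (intro rayleigh_uplink.intro rayleigh_uplink_axioms.intro)
    show "(LI \<alpha> \<phi>1 \<longlongrightarrow> 0) at_top"
      using assms(2,3) by (rule LI_tendsto_0)
  qed (use assms in auto)
  show ?thesis
    using assms(4,5,7,8) prob_success_1_1 prob_success_1_2 prob_success_2_2 by simp
qed

end
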